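(* Consider the lattice Boltzmann scheme described in the context under acoustic scaling ($\lambda>0$ fixed as $\Delta x\to 0$), with a local initialisation $w\in\mathbb{R}^q$ satisfying $w_1=1$ and, for every $r\in\{2,\dots,q\}$ such that the operator $\mathcal{G}_{1r}$ is nonzero, $w_r=\epsilon_r$. Then for every $n\in\mathbb{N}^*$ the modified equation of the $n$-th starting scheme reduces at order $O(1)$ to $\phi(0,x)=\phi(0,x)+O(\Delta x)$ and at the next order to $$\partial_t\phi(0,x)+\lambda\Big(\mathcal{G}_{11}+\sum_{r=2}^q\mathcal{G}_{1r}\epsilon_r\Big)\phi(0,x)=O(\Delta x),\qquad x\in\mathbb{R}^d,$$ so that the starting schemes are consistent at order $O(\Delta x)$ with the modified equation $\partial_t\phi+\lambda(\mathcal{G}_{11}+\sum_{r=2}^q\mathcal{G}_{1r}\epsilon_r)\phi=O(\Delta x)$ of the bulk finite difference scheme (evaluated at $t=0$). Moreover the initial datum of the conserved moment feeding the bulk and starting schemes equals the point-wise discretisation of the initial datum of the Cauchy problem.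
   Context: Fix $d\ge 1$, $q\ge 1$, velocities $c_1,\dots,c_q\in\mathbb{Z}^d$, invertible $M\in GL_q(\mathbb{R})$, $S=\mathrm{diag}(s_1,\dots,s_q)$ with $s_i\in(0,2]$ for $i\ge 2$, $s_1\in\mathbb{R}$, and $\epsilon\in\mathbb{R}^q$ with $\epsilon_1=1$; $K=I-S(I-\epsilon e_1^T)$. Space step $\Delta x$, lattice velocity $\lambda$, $\Delta t=\Delta x/\lambda$. Shifts $(x_\ell\phi)(x)=\phi(x-\Delta x e_\ell)$, $x^c=x_1^{c_1}\cdots x_d^{c_d}$; $T=M\mathrm{diag}(x^{c_1},\dots,x^{c_q})M^{-1}$, $E=TK$; time shift $(z\phi)(t)=\phi(t+\Delta t)$. The scheme is $m(t+\Delta t,\cdot)=Em(t,\cdot)$ with conserved moment $m_1$, targeting $\partial_t u+V\cdot\nabla u=0$, $u(0,\cdot)=u^\circ$; $m_1^\circ$ is the point-wise lattice discretisation of $u^\circ$. $\mathcal{G}=M\mathrm{diag}(c_1\cdot\nabla,\dots,c_q\cdot\nabla)M^{-1}$. Initialisation $m(0,x)=w m_1^\circ(x)$. The $n$-th starting scheme is $m_1(n\Delta t,x)=(E^nw)_1m_1^\circ(x)$; its modified equation is obtained by substituting a smooth $\phi$ into $(z^n\phi)(0,x)=((E^nw)_1\phi(0,\cdot))(x)$, Taylor-expanding in $\Delta x$ and dividing the first-order terms by $n\Delta x/\lambda$. The bulk finite difference scheme is $z^{Q+1-q}\det(zI-E)m_1=0$, where $Q$ is the number of $i\in\{2,\dots,q\}$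 with $s_i\neq1$; its modified equation at leading order is $\partial_t\phi+\lambda(\mathcal{G}_{11}+\sum_{r\ge2}\mathcal{G}_{1r}\epsilon_r)\phi=O(\Delta x)$. *)

theory Defs
  imports "HOL-Analysis.Analysis"
begin

text \<open>Conventions: the q moments/velocities are indexed by 0..q-1; index 0 is the
conserved moment (paper index 1). Matrices are functions nat => nat => real
restricted to indices below q.\<close>

fun dderiv :: "('a::real_normed_vector \<Rightarrow> real) \<Rightarrow> 'a list \<Rightarrow> 'a \<Rightarrow> real" where
  "dderiv f [] = f"
| "dderiv f (v # vs) = (\<lambda>z. frechet_derivative (dderiv f vs) (at z) v)"

definition smooth_fun :: "('a::real_normed_vector \<Rightarrow> real) \<Rightarrow> bool" where
  "smooth_fun f \<longleftrightarrow> (\<forall>vs. continuous_on UNIV (dderiv f vs) \<and> (\<forall>z. dderiv f vs differentiable (at z)))"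

definition vel :: "int ^ 'd \<Rightarrow> real ^ 'd" where
  "vel c = (\<chi> l. real_of_int (c $ l))"

text \<open>Relaxation matrix K = I - S (I - eps e_1^T).\<close>
definition Kmat :: "(nat \<Rightarrow> real) \<Rightarrow> (nat \<Rightarrow> real) \<Rightarrow> nat \<Rightarrow> nat \<Rightarrow> real" where
  "Kmat s eps k l = (if k = l then 1 else 0) - s k * ((if k = l then 1 else 0) - (if l = 0 then eps k else 0))"

text \<open>One step of the scheme, E = T K with T = M diag(x^{c_j}) M^{-1}, acting on a vector of
functions of space; (x^c f)(x) = f(x - dx c).\<close>
definition lbm_E :: "nat \<Rightarrow> (nat \<Rightarrow> nat \<Rightarrow> real) \<Rightarrow> (nat \<Rightarrow> nat \<Rightarrow> real) \<Rightarrow> (nat \<Rightarrow> int ^ 'd)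
    \<Rightarrow> (nat \<Rightarrow> real) \<Rightarrow> (nat \<Rightarrow> real) \<Rightarrow> real
    \<Rightarrow> (nat \<Rightarrow> real ^ 'd \<Rightarrow> real) \<Rightarrow> (nat \<Rightarrow> real ^ 'd \<Rightarrow> real)" where
  "lbm_E q M Minv c s eps dx m = (\<lambda>i x. \<Sum>j<q. M i j * (\<Sum>k<q. Minv j k *
      (\<Sum>l<q. Kmat s eps k l * m l (x - dx *\<^sub>R vel (c j)))))"

definition start_op :: "nat \<Rightarrow> (nat \<Rightarrow> nat \<Rightarrow> real) \<Rightarrow> (nat \<Rightarrow> nat \<Rightarrow> real) \<Rightarrow> (nat \<Rightarrow> int ^ 'd)
    \<Rightarrow> (nat \<Rightarrow> real) \<Rightarrow> (nat \<Rightarrow> real) \<Rightarrow> (nat \<Rightarrow> real) \<Rightarrow> nat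
    \<Rightarrow> (real ^ 'd \<Rightarrow> real) \<Rightarrow> real \<Rightarrow> real ^ 'd \<Rightarrow> real" where
  "start_op q M Minv c s eps w n u0 dx x =
     ((lbm_E q M Minv c s eps dx) ^^ n) (\<lambda>k y. w k * u0 y) 0 x"

text \<open>Entry (i,r) of G = M diag(c_1.grad, ..., c_q.grad) M^{-1}, applied to f at y.\<close>
definition lbm_G :: "nat \<Rightarrow> (nat \<Rightarrow> nat \<Rightarrow> real) \<Rightarrow> (nat \<Rightarrow> nat \<Rightarrow> real) \<Rightarrow> (nat \<Rightarrow> int ^ 'd)
    \<Rightarrow> nat \<Rightarrow> nat \<Rightarrow> (real ^ 'd \<Rightarrow> real) \<Rightarrow> real ^ 'd \<Rightarrow> real" where
  "lbm_G q M Minv c i r f y = (\<Sum>j<q. M i j * Minv j r * frechet_derivative f (at y) (vel (c j)))"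

definition G_nonzero :: "nat \<Rightarrow> (nat \<Rightarrow> nat \<Rightarrow> real) \<Rightarrow> (nat \<Rightarrow> nat \<Rightarrow> real) \<Rightarrow> (nat \<Rightarrow> int ^ 'd)
    \<Rightarrow> nat \<Rightarrow> nat \<Rightarrow> bool" where
  "G_nonzero q M Minv c i r \<longleftrightarrow> (\<exists>f y. smooth_fun f \<and> lbm_G q M Minv c i r f y \<noteq> 0)"

end

theory Submission
  imports Defs "HOL-Real_Asymp.Real_Asymp"
begin

text \<open>
  Expanding \<open>E\<^sup>n\<close> over all velocity paths \<open>j\<^sub>1 \<dots> j\<^sub>n\<close> writes the \<open>n\<close>-th starting scheme as a
  finite combination \<open>\<Sum> b\<^sub>j\<^sub>s u\<degree>(x - \<Delta>x S\<^sub>j\<^sub>s)\<close> of translates of the initial datum, where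
  \<open>S\<^sub>j\<^sub>s\<close> is the sum of the velocities along the path. The zeroth moment \<open>\<Sum> b\<^sub>j\<^sub>s\<close> is the
  conserved component of \<open>K\<^sup>n w\<close>, hence 1. For the first moment \<open>\<Sum> b\<^sub>j\<^sub>s S\<^sub>j\<^sub>s\<close>, every step
  contributes the flux \<open>\<Sum>\<^sub>r (K\<^sup>k w)\<^sub>r G\<^sub>1\<^sub>r\<close>; the components with \<open>w\<^sub>r = \<epsilon>\<^sub>r\<close> are fixed by the
  relaxation and the others have \<open>G\<^sub>1\<^sub>r = 0\<close>, so the first moment is \<open>n\<close> times the equilibrium
  flux \<open>G\<^sub>1\<^sub>1 + \<Sum>\<^sub>r G\<^sub>1\<^sub>r \<epsilon>\<^sub>r\<close>. Second-order Taylor expansions of \<open>u\<degree>\<close> in space and of \<open>\<phi>\<close>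
  in time then give the modified equation.
\<close>

lemma smooth_fun_differentiable: "smooth_fun f \<Longrightarrow> dderiv f vs differentiable at z"
  unfolding smooth_fun_def by blast

lemma smooth_fun_has_field_derivative_along_line:
  assumes "smooth_fun f"
  shows "((\<lambda>h. dderiv f (replicate m v) (p + h *\<^sub>R v)) has_field_derivative
           dderiv f (replicate (Suc m) v) (p + t *\<^sub>R v)) (at t)"
proof -
  let ?g = "dderiv f (replicate m v)" and ?z = "p + t *\<^sub>R v"
  have g: "(?g has_derivative frechet_derivative ?g (at ?z)) (at ?z)"
    using smooth_fun_differentiable[OF assms] frechet_derivative_works by blast
  have line: "((\<lambda>h. p + h *\<^sub>R v) has_derivative (\<lambda>h. h *\<^sub>R v)) (at t)"
    by (auto intro!: derivative_eq_intros)
  have "linear (frechet_derivative ?g (at ?z))"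
    using smooth_fun_differentiable[OF assms] by (rule linear_frechet_derivative)
  then have "frechet_derivative ?g (at ?z) (h *\<^sub>R v) = dderiv f (replicate (Suc m) v) ?z * h" for h
    by (simp add: linear_scale)
  then show ?thesis
    using has_derivative_compose[OF line g] by (simp add: has_field_derivative_def mult_commute_abs)
qed

lemma smooth_fun_taylor_bigo:
  assumes "smooth_fun f"
  shows "(\<lambda>h. f (p + h *\<^sub>R v) - f p - h * dderiv f [v] p) \<in> O[at 0](\<lambda>h. h\<^sup>2)"
proof -
  define g where "g m h = dderiv f (replicate m v) (p + h *\<^sub>R v)" for m h
  have g_deriv: "\<forall>m t. (g m has_real_derivative g (Suc m) t) (at t)"
    unfolding g_def using smooth_fun_has_field_derivative_along_line[OF assms] by blast
  have "continuous_on UNIV (dderiv f (replicate 2 v))"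
    using assms unfolding smooth_fun_def by blast
  then have "continuous_on {-1..1} (g 2)"
    unfolding g_def by (rule continuous_on_compose2) (auto intro!: continuous_intros)
  then have "bounded (g 2 ` {-1..1})"
    by (rule compact_imp_bounded[OF compact_continuous_image]) simp
  then obtain B where B: "\<And>t. t \<in> {-1..1} \<Longrightarrow> \<bar>g 2 t\<bar> \<le> B"
    unfolding bounded_iff by force
  have remainder: "\<bar>f (p + h *\<^sub>R v) - f p - h * dderiv f [v] p\<bar> \<le> B / 2 * h\<^sup>2"
    if "\<bar>h\<bar> < 1" for h
  proof -
    obtain t where "\<bar>t\<bar> \<le> \<bar>h\<bar>" and
      taylor: "g 0 h = (\<Sum>m<2. g m 0 / fact m * h ^ m) + g 2 t / fact 2 * h\<^sup>2"
      using Maclaurin_all_le[OF refl g_deriv] by blast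
    have "t \<in> {-1..1}"
      using \<open>\<bar>t\<bar> \<le> \<bar>h\<bar>\<close> that by auto
    then have "\<bar>g 2 t\<bar> \<le> B"
      by (rule B)
    have "f (p + h *\<^sub>R v) - f p - h * dderiv f [v] p = g 2 t / 2 * h\<^sup>2"
      using taylor by (simp add: g_def numeral_2_eq_2)
    also have "\<bar>\<dots>\<bar> \<le> B / 2 * h\<^sup>2"
      using \<open>\<bar>g 2 t\<bar> \<le> B\<close> by (simp add: abs_mult mult_right_mono)
    finally show ?thesis .
  qed
  have "\<forall>\<^sub>F h in at (0::real). \<bar>h\<bar> < 1"
    by (auto simp: eventually_at dist_real_def intro!: exI[of _ 1])
  then have "\<forall>\<^sub>F h in at 0.
      norm (f (p + h *\<^sub>R v) - f p - h * dderiv f [v] p) \<le> B / 2 * norm (h\<^sup>2)"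
    by (rule eventually_mono) (metis remainder real_norm_def abs_power2)
  then show ?thesis
    by (rule bigoI)
qed

lemma bounded_linear_smooth_fun:
  assumes "bounded_linear f"
  shows "smooth_fun f"
proof -
  have "dderiv f vs = f \<or> (\<exists>k. dderiv f vs = (\<lambda>_. k))" for vs
  proof (induction vs)
    case (Cons v vs)
    have "frechet_derivative f (at z) = f" for z
      using frechet_derivative_at bounded_linear_imp_has_derivative[OF assms] by metis
    moreover have "frechet_derivative (\<lambda>_. k) (at z) = (\<lambda>_. 0)" for z and k :: real
      using frechet_derivative_at has_derivative_const by metis
    ultimately show ?case using Cons by auto
  qed simp
  then show ?thesis
    using assms linear_continuous_on bounded_linear_imp_differentiable
    unfolding smooth_fun_def by (metis continuous_on_const differentiable_const)
qed

lemma dderiv_compose_linear: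
  assumes "smooth_fun f" and "bounded_linear g"
  shows "dderiv (\<lambda>y. f (g y)) vs = (\<lambda>y. dderiv f (map g vs) (g y))"
proof (induction vs)
  case (Cons v vs)
  have "((\<lambda>y. dderiv f (map g vs) (g y)) has_derivative
          (\<lambda>u. frechet_derivative (dderiv f (map g vs)) (at (g z)) (g u))) (at z)" for z
    using assms frechet_derivative_works bounded_linear_imp_has_derivative
    unfolding smooth_fun_def by (blast intro: has_derivative_compose)
  then have "frechet_derivative (\<lambda>y. dderiv f (map g vs) (g y)) (at z) =
      (\<lambda>u. frechet_derivative (dderiv f (map g vs)) (at (g z)) (g u))" for z
    by (metis frechet_derivative_at)
  with Cons show ?case by simp
qed simp

lemma smooth_fun_compose_linear:
  assumes "smooth_fun f" and "bounded_linear g"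
  shows "smooth_fun (\<lambda>y. f (g y))"
proof -
  have "continuous_on UNIV (\<lambda>y. dderiv f (map g vs) (g y))" for vs
    using assms linear_continuous_on[OF assms(2)] unfolding smooth_fun_def
    by (auto intro: continuous_on_compose2[of UNIV])
  moreover have "(dderiv f (map g vs) \<circ> g) differentiable at z" for vs z
    using assms bounded_linear_imp_differentiable unfolding smooth_fun_def
    by (blast intro: differentiable_chain_at)
  ultimately show ?thesis
    unfolding smooth_fun_def dderiv_compose_linear[OF assms] by (simp add: o_def)
qed

lemma smooth_fun_time_taylor_bigo:
  fixes \<phi> :: "real \<times> 'a::real_normed_vector \<Rightarrow> real"
  assumes "smooth_fun \<phi>"
  shows "(\<lambda>h. \<phi> (a * h, x) - \<phi> (0, x) - h * (a * deriv (\<lambda>t. \<phi> (t, x)) 0))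
    \<in> O[at 0](\<lambda>h. h\<^sup>2)"
proof -
  let ?D = "frechet_derivative \<phi> (at (0, x))"
  have "((\<lambda>t. \<phi> ((0, x) + t *\<^sub>R (1, 0))) has_real_derivative dderiv \<phi> [(1, 0)] (0, x)) (at 0)"
    using smooth_fun_has_field_derivative_along_line[OF assms, of 0 "(1, 0)" "(0, x)" 0] by simp
  then have "deriv (\<lambda>t. \<phi> (t, x)) 0 = ?D (1, 0)"
    by (simp add: DERIV_imp_deriv)
  moreover have "linear ?D"
    using smooth_fun_differentiable[OF assms, of "[]"] by (simp add: linear_frechet_derivative)
  then have "?D (a, 0) = a * ?D (1, 0)"
    using linear_scale[of ?D a "(1, 0)"] by simp
  ultimately show ?thesis
    using smooth_fun_taylor_bigo[OF assms, of "(0, x)" "(a, 0)"] by (simp add: mult_ac)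
qed

lemma modified_equation_from_expansions:
  fixes u F :: "real \<Rightarrow> real"
  assumes "a \<noteq> 0"
    and F: "(\<lambda>h. F h - u 0 + h * b) \<in> O[at 0](\<lambda>h. h\<^sup>2)"
    and u: "(\<lambda>h. u (a * h) - u 0 - h * (a * d)) \<in> O[at 0](\<lambda>h. h\<^sup>2)"
  shows "(\<lambda>h. F h - u 0) \<in> O[at 0](\<lambda>h. h)"
    and "(\<lambda>h. u (a * h) - F h) \<in> O[at 0](\<lambda>h. h)"
    and "(\<lambda>h. (u (a * h) - F h) / (a * h) - (d + b / a)) \<in> O[at 0](\<lambda>h. h)"
proof -
  have square: "(\<lambda>h::real. h\<^sup>2) \<in> O[at 0](\<lambda>h. h)"
    by real_asymp
  have linear: "(\<lambda>h. h * k) \<in> O[at 0](\<lambda>h. h)" for k :: real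
    by (intro bigoI[of _ "\<bar>k\<bar>"]) (simp add: abs_mult mult.commute)
  have F1: "(\<lambda>h. F h - u 0 + h * b) \<in> O[at 0](\<lambda>h. h)"
    using landau_o.big_trans[OF F square] .
  have u1: "(\<lambda>h. u (a * h) - u 0 - h * (a * d)) \<in> O[at 0](\<lambda>h. h)"
    using landau_o.big_trans[OF u square] .
  show "(\<lambda>h. F h - u 0) \<in> O[at 0](\<lambda>h. h)"
    using sum_in_bigo(2)[OF F1 linear[of b]] by simp
  show "(\<lambda>h. u (a * h) - F h) \<in> O[at 0](\<lambda>h. h)"
    using sum_in_bigo(1)[OF sum_in_bigo(2)[OF u1 F1] linear[of "a * d + b"]]
    by (simp add: algebra_simps)
  have "(\<lambda>h. ((u (a * h) - u 0 - h * (a * d)) - (F h - u 0 + h * b)) / (a * h))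
      \<in> O[at 0](\<lambda>h. h\<^sup>2 / (a * h))"
    using assms(1) eventually_neq_at_within[of 0 0 UNIV]
    by (intro landau_o.big.divide_right sum_in_bigo(2)[OF u F]) (auto elim: eventually_mono)
  also have "(\<lambda>h. h\<^sup>2 / (a * h)) = (\<lambda>h. h * (1 / a))"
    by (simp add: power2_eq_square fun_eq_iff)
  finally have remainder: "(\<lambda>h. ((u (a * h) - u 0 - h * (a * d)) - (F h - u 0 + h * b)) / (a * h))
      \<in> O[at 0](\<lambda>h. h)"
    using landau_o.big_trans linear by blast
  have "\<forall>\<^sub>F h in at 0. ((u (a * h) - u 0 - h * (a * d)) - (F h - u 0 + h * b)) / (a * h)
      = (u (a * h) - F h) / (a * h) - (d + b / a)"
    using eventually_neq_at_within[of 0 0 UNIV]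
    by (rule eventually_mono) (use assms(1) in \<open>simp add: field_simps\<close>)
  with remainder show "(\<lambda>h. (u (a * h) - F h) / (a * h) - (d + b / a)) \<in> O[at 0](\<lambda>h. h)"
    by (rule landau_o.big.in_cong[THEN iffD1, rotated])
qed

definition G_vec :: "nat \<Rightarrow> (nat \<Rightarrow> nat \<Rightarrow> real) \<Rightarrow> (nat \<Rightarrow> nat \<Rightarrow> real) \<Rightarrow> (nat \<Rightarrow> int ^ 'd)
    \<Rightarrow> nat \<Rightarrow> nat \<Rightarrow> real ^ 'd" where
  "G_vec q M Minv c i r = (\<Sum>j<q. (M i j * Minv j r) *\<^sub>R vel (c j))"

lemma lbm_G_eq_frechet_derivative:
  assumes "f differentiable at y"
  shows "lbm_G q M Minv c i r f y = frechet_derivative f (at y) (G_vec q M Minv c i r)"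
proof -
  have "linear (frechet_derivative f (at y))"
    using assms by (rule linear_frechet_derivative)
  then show ?thesis
    unfolding lbm_G_def G_vec_def by (simp add: linear_sum linear_scale)
qed

lemma G_vec_eq_0_if_not_G_nonzero:
  assumes "\<not> G_nonzero q M Minv c i r"
  shows "G_vec q M Minv c i r = 0"
proof -
  let ?v = "G_vec q M Minv c i r"
  have lin: "bounded_linear (\<lambda>y. ?v \<bullet> y)"
    by (rule bounded_linear_inner_right)
  then have "frechet_derivative (\<lambda>y. ?v \<bullet> y) (at 0) = (\<lambda>y. ?v \<bullet> y)"
    by (metis bounded_linear_imp_has_derivative frechet_derivative_at)
  then have "lbm_G q M Minv c i r (\<lambda>y. ?v \<bullet> y) 0 = ?v \<bullet> ?v"
    using lin by (simp add: lbm_G_eq_frechet_derivative bounded_linear_imp_differentiable)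
  moreover have "lbm_G q M Minv c i r (\<lambda>y. ?v \<bullet> y) 0 = 0"
    using assms bounded_linear_smooth_fun[OF bounded_linear_inner_right]
    unfolding G_nonzero_def by blast
  ultimately show ?thesis by simp
qed

lemma sum_Kmat_scaleR:
  fixes y :: "nat \<Rightarrow> 'a::real_vector"
  assumes "r < q" and "0 < q"
  shows "(\<Sum>k<q. Kmat s eps r k *\<^sub>R y k) = y r - s r *\<^sub>R (y r - eps r *\<^sub>R y 0)"
proof -
  have "Kmat s eps r k *\<^sub>R y k = (if k = r then y k - s r *\<^sub>R y k else 0)
      + (if k = 0 then (s r * eps r) *\<^sub>R y k else 0)" for k
    unfolding Kmat_def by (simp add: algebra_simps)
  then show ?thesis
    using assms by (simp add: sum.distrib algebra_simps)
qed

definition words :: "nat \<Rightarrow> nat \<Rightarrow> nat list set" where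
  "words q n = {js. set js \<subseteq> {..<q} \<and> length js = n}"

lemma words_0 [simp]: "words q 0 = {[]}"
  by (auto simp: words_def)

lemma sum_words_Suc: "(\<Sum>js\<in>words q (Suc n). f js) = (\<Sum>j<q. \<Sum>js\<in>words q n. f (j # js))"
proof -
  have "words q (Suc n) = (\<lambda>p. snd p # fst p) ` (words q n \<times> {..<q})"
    using lists_length_Suc_eq[of "{..<q}" n] by (simp add: words_def case_prod_beta)
  moreover have "inj_on (\<lambda>p. snd p # fst p) (words q n \<times> {..<q})"
    by (auto simp: inj_on_def)
  ultimately have "(\<Sum>js\<in>words q (Suc n). f js) = (\<Sum>p\<in>words q n \<times> {..<q}. f (snd p # fst p))"
    by (simp add: sum.reindex)
  also have "\<dots> = (\<Sum>js\<in>words q n. \<Sum>j<q. f (j # js))"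
    by (simp add: sum.cartesian_product case_prod_beta)
  finally show ?thesis
    by (simp add: sum.swap[of _ "words q n"])
qed

lemma sum_delta_mult:
  fixes f :: "'a \<Rightarrow> 'b::semiring_1"
  assumes "finite S"
  shows "(\<Sum>l\<in>S. (if i = l then 1 else 0) * f l) = (if i \<in> S then f i else 0)"
proof -
  have "(\<Sum>l\<in>S. (if i = l then 1 else 0) * f l) = (\<Sum>l\<in>S. if i = l then f l else 0)"
    by (rule sum.cong) auto
  with assms show ?thesis by simp
qed

locale lbm_scheme =
  fixes q :: nat and M Minv :: "nat \<Rightarrow> nat \<Rightarrow> real" and c :: "nat \<Rightarrow> int ^ 'd"
    and s eps w :: "nat \<Rightarrow> real"
  assumes q_pos: "0 < q"
    and M_Minv: "\<forall>i<q. \<forall>k<q. (\<Sum>j<q. M i j * Minv j k) = (if i = k then 1 else 0)"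
    and eps_0: "eps 0 = 1"
    and w_0: "w 0 = 1"
begin

text \<open>One step splits as \<open>E = \<Sum>\<^sub>j x\<^sup>c\<^sup>j A\<^sub>j\<close> with \<open>A\<^sub>j = M e\<^sub>j e\<^sub>j\<^sup>T M\<^sup>-\<^sup>1 K\<close>.\<close>
definition A :: "nat \<Rightarrow> nat \<Rightarrow> nat \<Rightarrow> real" where
  "A j i l = M i j * (\<Sum>r<q. Minv j r * Kmat s eps r l)"

fun A_word :: "nat list \<Rightarrow> nat \<Rightarrow> nat \<Rightarrow> real" where
  "A_word [] i l = (if i = l then 1 else 0)"
| "A_word (j # js) i l = (\<Sum>k<q. A j i k * A_word js k l)"

definition weight :: "nat list \<Rightarrow> nat \<Rightarrow> real" where
  "weight js i = (\<Sum>l<q. A_word js i l * w l)"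

abbreviation shift :: "nat list \<Rightarrow> real ^ 'd" where
  "shift js \<equiv> (\<Sum>j\<leftarrow>js. vel (c j))"

lemma lbm_E_eq_sum_A:
  "lbm_E q M Minv c s eps dx m i x = (\<Sum>j<q. \<Sum>l<q. A j i l * m l (x - dx *\<^sub>R vel (c j)))"
proof -
  have "lbm_E q M Minv c s eps dx m i x
      = (\<Sum>j<q. \<Sum>k<q. \<Sum>l<q. M i j * Minv j k * Kmat s eps k l * m l (x - dx *\<^sub>R vel (c j)))"
    unfolding lbm_E_def by (simp add: sum_distrib_left mult.assoc)
  also have "\<dots> = (\<Sum>j<q. \<Sum>l<q. \<Sum>k<q. M i j * Minv j k * Kmat s eps k l * m l (x - dx *\<^sub>R vel (c j)))"
    by (rule sum.cong[OF refl], rule sum.swap)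
  finally show ?thesis
    unfolding A_def by (simp add: sum_distrib_left sum_distrib_right mult.assoc)
qed

lemma lbm_E_power_eq_sum_words:
  assumes "i < q"
  shows "(lbm_E q M Minv c s eps dx ^^ n) m i x =
    (\<Sum>js\<in>words q n. \<Sum>l<q. A_word js i l * m l (x - dx *\<^sub>R shift js))"
  using assms
proof (induction n arbitrary: i x)
  case 0
  then show ?case by (simp add: sum_delta_mult)
next
  case (Suc n)
  have "(lbm_E q M Minv c s eps dx ^^ Suc n) m i x = (\<Sum>j<q. \<Sum>k<q. A j i k *
      (\<Sum>js\<in>words q n. \<Sum>l<q. A_word js k l * m l (x - dx *\<^sub>R vel (c j) - dx *\<^sub>R shift js)))"
    by (simp add: lbm_E_eq_sum_A Suc.IH)
  also have "\<dots> = (\<Sum>j<q. \<Sum>js\<in>words q n. \<Sum>k<q. \<Sum>l<q.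
      A j i k * A_word js k l * m l (x - dx *\<^sub>R shift (j # js)))"
    by (simp add: sum_distrib_left mult.assoc algebra_simps sum.swap[of _ "{..<q}" "words q n"])
  also have "\<dots> = (\<Sum>j<q. \<Sum>js\<in>words q n. \<Sum>l<q. \<Sum>k<q.
      A j i k * A_word js k l * m l (x - dx *\<^sub>R shift (j # js)))"
    by (rule sum.cong[OF refl], rule sum.cong[OF refl], rule sum.swap)
  finally show ?case
    by (simp add: sum_words_Suc sum_distrib_right)
qed

lemma start_op_eq_sum_words:
  "start_op q M Minv c s eps w n u0 dx x = (\<Sum>js\<in>words q n. weight js 0 * u0 (x - dx *\<^sub>R shift js))"
  unfolding start_op_def weight_def lbm_E_power_eq_sum_words[OF q_pos]
  by (simp add: sum_distrib_right mult.assoc)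

lemma weight_Cons: "weight (j # js) i = (\<Sum>k<q. A j i k * weight js k)"
proof -
  have "weight (j # js) i = (\<Sum>l<q. \<Sum>k<q. A j i k * A_word js k l * w l)"
    unfolding weight_def by (simp add: sum_distrib_right)
  also have "\<dots> = (\<Sum>k<q. \<Sum>l<q. A j i k * A_word js k l * w l)"
    by (rule sum.swap)
  finally show ?thesis
    unfolding weight_def by (simp add: sum_distrib_left mult.assoc)
qed

lemma sum_A:
  assumes "i < q"
  shows "(\<Sum>j<q. A j i l) = Kmat s eps i l"
proof -
  have "(\<Sum>j<q. A j i l) = (\<Sum>j<q. \<Sum>r<q. M i j * Minv j r * Kmat s eps r l)"
    unfolding A_def by (simp add: sum_distrib_left mult.assoc)
  also have "\<dots> = (\<Sum>r<q. (\<Sum>j<q. M i j * Minv j r) * Kmat s eps r l)"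
    by (subst sum.swap) (simp add: sum_distrib_right)
  also have "\<dots> = (\<Sum>r<q. if i = r then Kmat s eps r l else 0)"
    using M_Minv assms by (intro sum.cong) auto
  finally show ?thesis
    using assms by simp
qed

lemma sum_words_Suc_weight:
  fixes g :: "nat list \<Rightarrow> 'a::real_vector"
  shows "(\<Sum>js\<in>words q (Suc n). weight js i *\<^sub>R g js) =
    (\<Sum>j<q. \<Sum>k<q. A j i k *\<^sub>R (\<Sum>js\<in>words q n. weight js k *\<^sub>R g (j # js)))"
  unfolding sum_words_Suc weight_Cons
  by (simp add: scaleR_sum_left scaleR_sum_right sum.swap[of _ "words q n"])

definition moment0 :: "nat \<Rightarrow> nat \<Rightarrow> real" where
  "moment0 n i = (\<Sum>js\<in>words q n. weight js i)"

definition moment1 :: "nat \<Rightarrow> nat \<Rightarrow> real ^ 'd" where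
  "moment1 n i = (\<Sum>js\<in>words q n. weight js i *\<^sub>R shift js)"

lemma moment0_0: "i < q \<Longrightarrow> moment0 0 i = w i"
  by (simp add: moment0_def weight_def sum_delta_mult)

lemma moment0_Suc:
  assumes "i < q"
  shows "moment0 (Suc n) i = (\<Sum>k<q. Kmat s eps i k * moment0 n k)"
proof -
  have "moment0 (Suc n) i = (\<Sum>j<q. \<Sum>k<q. A j i k * moment0 n k)"
    using sum_words_Suc_weight[where g = "\<lambda>_. 1 :: real"] by (simp add: moment0_def)
  also have "\<dots> = (\<Sum>k<q. (\<Sum>j<q. A j i k) * moment0 n k)"
    by (subst sum.swap) (simp add: sum_distrib_right)
  finally show ?thesis
    using assms by (simp add: sum_A)
qed

lemma moment0_conserved: "moment0 n 0 = 1"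
proof (induction n)
  case (Suc n)
  then show ?case
    using sum_Kmat_scaleR[OF q_pos q_pos, of s eps "moment0 n"] q_pos
    by (simp add: moment0_Suc eps_0)
qed (use q_pos w_0 in \<open>simp add: moment0_0\<close>)

lemma moment0_equilibrium:
  assumes "r < q" and "w r = eps r"
  shows "moment0 n r = eps r"
proof (induction n)
  case (Suc n)
  then show ?case
    using sum_Kmat_scaleR[OF assms(1) q_pos, of s eps "moment0 n"] assms(1)
    by (simp add: moment0_Suc moment0_conserved)
qed (use assms in \<open>simp add: moment0_0\<close>)

lemma moment1_Suc:
  assumes "i < q"
  shows "moment1 (Suc n) i = (\<Sum>j<q. (\<Sum>k<q. A j i k * moment0 n k) *\<^sub>R vel (c j))
    + (\<Sum>k<q. Kmat s eps i k *\<^sub>R moment1 n k)"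
proof -
  have "moment1 (Suc n) i = (\<Sum>j<q. \<Sum>k<q. (A j i k * moment0 n k) *\<^sub>R vel (c j))
      + (\<Sum>j<q. \<Sum>k<q. A j i k *\<^sub>R moment1 n k)"
    unfolding moment1_def moment0_def sum_words_Suc_weight
    by (simp add: scaleR_add_right sum.distrib flip: scaleR_sum_left)
  also have "(\<Sum>j<q. \<Sum>k<q. A j i k *\<^sub>R moment1 n k)
      = (\<Sum>k<q. (\<Sum>j<q. A j i k) *\<^sub>R moment1 n k)"
    by (subst sum.swap) (simp add: scaleR_sum_left)
  finally show ?thesis
    using assms by (simp add: sum_A scaleR_sum_left)
qed

lemma sum_A_moment0:
  "(\<Sum>k<q. A j i k * moment0 n k) = M i j * (\<Sum>r<q. Minv j r * moment0 (Suc n) r)"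
proof -
  have "(\<Sum>k<q. A j i k * moment0 n k) = M i j * (\<Sum>k<q. \<Sum>r<q. Minv j r * Kmat s eps r k * moment0 n k)"
    unfolding A_def by (simp add: sum_distrib_left sum_distrib_right mult.assoc)
  also have "\<dots> = M i j * (\<Sum>r<q. Minv j r * (\<Sum>k<q. Kmat s eps r k * moment0 n k))"
    by (subst sum.swap) (simp add: sum_distrib_left mult.assoc)
  finally show ?thesis
    by (simp add: moment0_Suc)
qed

lemma moment1_conserved:
  assumes "\<forall>r<q. w r = eps r \<or> G_vec q M Minv c 0 r = 0"
  shows "moment1 n 0 = real n *\<^sub>R (\<Sum>r<q. eps r *\<^sub>R G_vec q M Minv c 0 r)"
proof (induction n)
  case 0
  then show ?case by (simp add: moment1_def)
next
  case (Suc n)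
  have "(\<Sum>j<q. (\<Sum>k<q. A j 0 k * moment0 n k) *\<^sub>R vel (c j))
      = (\<Sum>j<q. \<Sum>r<q. moment0 (Suc n) r *\<^sub>R ((M 0 j * Minv j r) *\<^sub>R vel (c j)))"
    unfolding sum_A_moment0 by (simp add: sum_distrib_left scaleR_sum_left mult_ac)
  also have "\<dots> = (\<Sum>r<q. moment0 (Suc n) r *\<^sub>R G_vec q M Minv c 0 r)"
    unfolding G_vec_def by (subst sum.swap) (simp add: scaleR_sum_right)
  also have "\<dots> = (\<Sum>r<q. eps r *\<^sub>R G_vec q M Minv c 0 r)"
    using assms moment0_equilibrium by (intro sum.cong) auto
  finally show ?case
    using sum_Kmat_scaleR[OF q_pos q_pos, of s eps "moment1 n"] Suc q_pos
    by (simp add: moment1_Suc eps_0 algebra_simps)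
qed

lemma start_op_taylor:
  assumes "smooth_fun u0" and "\<forall>r<q. w r = eps r \<or> G_vec q M Minv c 0 r = 0"
  shows "(\<lambda>dx. start_op q M Minv c s eps w n u0 dx x - u0 x
      + dx * (real n * frechet_derivative u0 (at x) (\<Sum>r<q. eps r *\<^sub>R G_vec q M Minv c 0 r)))
    \<in> O[at 0](\<lambda>dx. dx\<^sup>2)"
proof -
  let ?D = "frechet_derivative u0 (at x)"
  have lin: "linear ?D"
    using smooth_fun_differentiable[OF assms(1), of "[]"] by (simp add: linear_frechet_derivative)
  have "real n * ?D (\<Sum>r<q. eps r *\<^sub>R G_vec q M Minv c 0 r) = ?D (moment1 n 0)"
    using moment1_conserved[OF assms(2)] lin by (simp add: linear_scale)
  also have "\<dots> = (\<Sum>js\<in>words q n. weight js 0 * ?D (shift js))"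
    unfolding moment1_def using lin by (simp add: linear_sum linear_scale)
  finally have first: "real n * ?D (\<Sum>r<q. eps r *\<^sub>R G_vec q M Minv c 0 r)
      = (\<Sum>js\<in>words q n. weight js 0 * ?D (shift js))" .
  have zeroth: "u0 x = (\<Sum>js\<in>words q n. weight js 0 * u0 x)"
    using moment0_conserved[of n] by (simp add: moment0_def flip: sum_distrib_right)
  have "start_op q M Minv c s eps w n u0 dx x - u0 x
      + dx * (real n * ?D (\<Sum>r<q. eps r *\<^sub>R G_vec q M Minv c 0 r))
    = (\<Sum>js\<in>words q n. weight js 0 *
        (u0 (x + dx *\<^sub>R - shift js) - u0 x - dx * dderiv u0 [- shift js] x))" for dx
    unfolding start_op_eq_sum_words first using lin
    by (subst zeroth) (simp add: linear_neg sum_distrib_left algebra_simps flip: sum.distrib sum_subtractf)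
  moreover have "(\<lambda>dx. u0 (x + dx *\<^sub>R - shift js) - u0 x - dx * dderiv u0 [- shift js] x)
      \<in> O[at 0](\<lambda>dx. dx\<^sup>2)" for js
    by (rule smooth_fun_taylor_bigo[OF assms(1)])
  ultimately show ?thesis
    by (simp add: big_sum_in_bigo)
qed

lemma starting_scheme_consistency:
  fixes \<phi> :: "real \<times> (real ^ 'd) \<Rightarrow> real"
  assumes \<phi>: "smooth_fun \<phi>" and n: "n \<ge> 1" and lam: "lam > 0"
    and equilibrium: "\<forall>r<q. w r = eps r \<or> G_vec q M Minv c 0 r = 0"
  shows "(\<lambda>dx. start_op q M Minv c s eps w n (\<lambda>y. \<phi> (0, y)) dx x - \<phi> (0, x))
              \<in> O[at_right 0](\<lambda>dx. dx) \<and>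
           (\<lambda>dx. \<phi> (real n * dx / lam, x) - start_op q M Minv c s eps w n (\<lambda>y. \<phi> (0, y)) dx x)
              \<in> O[at_right 0](\<lambda>dx. dx) \<and>
           (\<lambda>dx. (\<phi> (real n * dx / lam, x) - start_op q M Minv c s eps w n (\<lambda>y. \<phi> (0, y)) dx x)
                    / (real n * dx / lam)
                 - (deriv (\<lambda>t. \<phi> (t, x)) 0
                    + lam * (lbm_G q M Minv c 0 0 (\<lambda>y. \<phi> (0, y)) x
                             + (\<Sum>r\<in>{1..<q}. lbm_G q M Minv c 0 r (\<lambda>y. \<phi> (0, y)) x * eps r))))
              \<in> O[at_right 0](\<lambda>dx. dx)"
proof -
  define u0 where "u0 = (\<lambda>y. \<phi> (0, y))"
  define a where "a = real n / lam"
  define \<Gamma> where "\<Gamma> = (\<Sum>r<q. eps r *\<^sub>R G_vec q M Minv c 0 r)"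
  have u0: "smooth_fun u0"
    unfolding u0_def using \<phi> by (rule smooth_fun_compose_linear) (simp add: bounded_linear_Pair)
  then have "u0 differentiable at x" "linear (frechet_derivative u0 (at x))"
    using smooth_fun_differentiable[of u0 "[]"] by (simp_all add: linear_frechet_derivative)
  moreover have "{..<q} = insert 0 {1..<q}"
    using q_pos by auto
  ultimately have flux: "lbm_G q M Minv c 0 0 u0 x + (\<Sum>r\<in>{1..<q}. lbm_G q M Minv c 0 r u0 x * eps r)
      = frechet_derivative u0 (at x) \<Gamma>"
    unfolding \<Gamma>_def
    by (simp add: lbm_G_eq_frechet_derivative linear_add linear_sum linear_scale eps_0 mult.commute)
  have a: "a \<noteq> 0" "real n * dx / lam = a * dx" for dx
    using n lam by (auto simp: a_def)
  have "real n * frechet_derivative u0 (at x) \<Gamma> / a = lam * frechet_derivative u0 (at x) \<Gamma>"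
    using n lam by (simp add: a_def)
  then have "(\<lambda>dx. start_op q M Minv c s eps w n u0 dx x - \<phi> (0, x)) \<in> O[at 0](\<lambda>dx. dx) \<and>
      (\<lambda>dx. \<phi> (a * dx, x) - start_op q M Minv c s eps w n u0 dx x) \<in> O[at 0](\<lambda>dx. dx) \<and>
      (\<lambda>dx. (\<phi> (a * dx, x) - start_op q M Minv c s eps w n u0 dx x) / (a * dx)
         - (deriv (\<lambda>t. \<phi> (t, x)) 0 + lam * frechet_derivative u0 (at x) \<Gamma>)) \<in> O[at 0](\<lambda>dx. dx)"
    using modified_equation_from_expansions[where u = "\<lambda>t. \<phi> (t, x)" and a = a
        and F = "\<lambda>dx. start_op q M Minv c s eps w n u0 dx x"
        and b = "real n * frechet_derivative u0 (at x) \<Gamma>" and d = "deriv (\<lambda>t. \<phi> (t, x)) 0"]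
      a(1) start_op_taylor[OF u0 equilibrium, of n x] smooth_fun_time_taylor_bigo[OF \<phi>, of a x]
    by (simp add: u0_def \<Gamma>_def)
  then show ?thesis
    unfolding a(2) flux[unfolded u0_def, symmetric] u0_def
    by (blast intro: landau_o.big.filter_mono[OF at_le[OF subset_UNIV]])
qed

end

theorem corollary1:
  fixes q :: nat and M Minv :: "nat \<Rightarrow> nat \<Rightarrow> real" and c :: "nat \<Rightarrow> int ^ 'd"
    and s eps w :: "nat \<Rightarrow> real" and lam :: real
  assumes q_pos: "q \<ge> 1"
    and M_inv1: "\<forall>i<q. \<forall>k<q. (\<Sum>j<q. M i j * Minv j k) = (if i = k then 1 else 0)"
    and M_inv2: "\<forall>i<q. \<forall>k<q. (\<Sum>j<q. Minv i j * M j k) = (if i = k then 1 else 0)"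
    and s_range: "\<forall>i\<in>{1..<q}. 0 < s i \<and> s i \<le> 2"
    and eps1: "eps 0 = 1"
    and lam_pos: "lam > 0"
    and w1: "w 0 = 1"
    and w_eps: "\<forall>r\<in>{1..<q}. G_nonzero q M Minv c 0 r \<longrightarrow> w r = eps r"
  shows "(\<forall>n\<ge>1. \<forall>\<phi> :: real \<times> (real ^ 'd) \<Rightarrow> real. \<forall>x. smooth_fun \<phi> \<longrightarrow>
           (\<lambda>dx. start_op q M Minv c s eps w n (\<lambda>y. \<phi> (0, y)) dx x - \<phi> (0, x))
              \<in> O[at_right 0](\<lambda>dx. dx) \<and>
           (\<lambda>dx. \<phi> (real n * dx / lam, x) - start_op q M Minv c s eps w n (\<lambda>y. \<phi> (0, y)) dx x)
              \<in> O[at_right 0](\<lambda>dx. dx) \<and>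
           (\<lambda>dx. (\<phi> (real n * dx / lam, x) - start_op q M Minv c s eps w n (\<lambda>y. \<phi> (0, y)) dx x)
                    / (real n * dx / lam)
                 - (deriv (\<lambda>t. \<phi> (t, x)) 0
                    + lam * (lbm_G q M Minv c 0 0 (\<lambda>y. \<phi> (0, y)) x
                             + (\<Sum>r\<in>{1..<q}. lbm_G q M Minv c 0 r (\<lambda>y. \<phi> (0, y)) x * eps r))))
              \<in> O[at_right 0](\<lambda>dx. dx))
        \<and> (\<forall>u0 dx y. start_op q M Minv c s eps w 0 u0 dx y = u0 y)"
proof -
  interpret lbm_scheme q M Minv c s eps w
    using q_pos M_inv1 eps1 w1 by unfold_locales auto
  have equilibrium: "\<forall>r<q. w r = eps r \<or> G_vec q M Minv c 0 r = 0"
  proof (intro allI impI)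
    fix r assume "r < q"
    show "w r = eps r \<or> G_vec q M Minv c 0 r = 0"
    proof (cases "r = 0")
      case False
      with \<open>r < q\<close> have "r \<in> {1..<q}" by simp
      then show ?thesis
        using w_eps G_vec_eq_0_if_not_G_nonzero by blast
    qed (simp add: w1 eps1)
  qed
  have "start_op q M Minv c s eps w 0 u0 dx y = u0 y" for u0 dx y
    by (simp add: start_op_def w1)
  with starting_scheme_consistency[OF _ _ lam_pos equilibrium] show ?thesis
    by blast
qed

end
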